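(* There is a constant $C$ (independent of $V$ and $\eta$) such that for all $V$ and all $\eta\ge0$, $$\frac{\sqrt2}{3\pi^2}\big(\eta^{1/2}-CV^{-\alpha_3}\big)^3<F_V(\eta)<\frac{\sqrt2}{3\pi^2}\big(\eta+E_1(V)\big)^{3/2}.$$
   Context: Fix exponents $\alpha_1\ge\alpha_2\ge\alpha_3>0$ with $\alpha_1+\alpha_2+\alpha_3=1$ and $\Lambda_V=\{x\in\mathbb{R}^3:0\le x_j\le V^{\alpha_j}\}$. The Dirichlet Laplacian $-\Delta/2$ on $\Lambda_V$ has eigenvalues $\epsilon_{\mathbf{n},V}=\frac{\pi^2}{2}\sum_{j=1}^3n_j^2V^{-2\alpha_j}$, $n_j\ge1$, listed with multiplicity in increasing order as $E_1(V)<E_2(V)\le\dots$; $\eta_k(V)=E_k(V)-E_1(V)$ and $F_V(\eta)=V^{-1}\#\{k:\eta_k(V)\le\eta\}$. *)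

theory Defs
  imports Complex_Main
begin

definition pos_idx :: "(nat \<times> nat \<times> nat) set" where
  "pos_idx = {(n1, n2, n3). n1 \<ge> 1 \<and> n2 \<ge> 1 \<and> n3 \<ge> 1}"

text \<open>Dirichlet eigenvalue eps_{n,V} of -Delta/2 on the box with sides V^a1, V^a2, V^a3.\<close>
definition eig :: "real \<Rightarrow> real \<Rightarrow> real \<Rightarrow> real \<Rightarrow> nat \<times> nat \<times> nat \<Rightarrow> real" where
  "eig a1 a2 a3 V n = (case n of (n1, n2, n3) \<Rightarrow>
     pi\<^sup>2 / 2 * (real n1 ^ 2 * V powr (-2 * a1) + real n2 ^ 2 * V powr (-2 * a2)
                 + real n3 ^ 2 * V powr (-2 * a3)))"

definition E1 :: "real \<Rightarrow> real \<Rightarrow> real \<Rightarrow> real \<Rightarrow> real" where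
  "E1 a1 a2 a3 V = Inf (eig a1 a2 a3 V ` pos_idx)"

text \<open>F_V(eta) = V^{-1} #{k : E_k(V) - E_1(V) <= eta}, eigenvalues counted with multiplicity,
  i.e. the number of multi-indices n with eps_{n,V} - E_1(V) <= eta.\<close>
definition FV :: "real \<Rightarrow> real \<Rightarrow> real \<Rightarrow> real \<Rightarrow> real \<Rightarrow> real" where
  "FV a1 a2 a3 V \<eta> =
     real (card {n \<in> pos_idx. eig a1 a2 a3 V n - E1 a1 a2 a3 V \<le> \<eta>}) / V"

end

theory Submission
  imports Defs "HOL-Analysis.Analysis"
begin

text \<open>
  With h_j = pi V^(-a_j) / sqrt 2 the eigenvalue eps_n equals |p_n|^2 for the lattice point
  p_n = (n_1 h_1, n_2 h_2, n_3 h_3), so V F_V(eta) counts the p_n with all n_j >= 1 in the closed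
  ball of radius R = sqrt (eta + E_1). Attach to n the cell of all y in R^3 with
  (n_j - 1) h_j <= |y_j| < n_j h_j: eight boxes, of total volume 8 h_1 h_2 h_3 = 2 sqrt 2 pi^3 / V.
  The cells are disjoint, those of the counted points lie in the ball of radius R and cover the
  ball of radius R - |h|, whence 4/3 pi (R - |h|)^3 <= 8 h_1 h_2 h_3 V F_V(eta) < 4/3 pi R^3; the
  upper bound is strict because the cells miss a small ball touching the sphere at (R, 0, 0).
  Finally E_1 = |h|^2 and |h| <= pi sqrt (3/2) V^(-a_3).
\<close>

lemma power3_strict_mono:
  fixes x y :: real
  assumes "x < y"
  shows "x ^ 3 < y ^ 3"
proof (cases "0 \<le> x")
  case True
  then show ?thesis using assms by (intro power_strict_mono) auto
next
  case x_neg: False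
  show ?thesis
  proof (cases "y \<le> 0")
    case True
    have "(- y) ^ 3 < (- x) ^ 3" using assms True by (intro power_strict_mono) auto
    then show ?thesis by simp
  next
    case False
    then show ?thesis using x_neg by (simp add: power_less_zero_eq less_trans[of _ 0])
  qed
qed

lemma sqrt_power3_eq_powr: "0 \<le> x \<Longrightarrow> sqrt x ^ 3 = x powr (3 / 2)" for x :: real
  by (simp add: powr_half_sqrt_powr real_sqrt_power)

lemma norm_triple: "norm (a, b, c) = sqrt (a\<^sup>2 + b\<^sup>2 + c\<^sup>2)" for a b c :: real
  by (simp add: norm_Pair add.assoc)

lemma norm_triple_le_componentwise:
  fixes a1 a2 a3 b1 b2 b3 :: real
  assumes "\<bar>a1\<bar> \<le> \<bar>b1\<bar>" "\<bar>a2\<bar> \<le> \<bar>b2\<bar>" "\<bar>a3\<bar> \<le> \<bar>b3\<bar>"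
  shows "norm (a1, a2, a3) \<le> norm (b1, b2, b3)"
  using assms by (intro norm_le_componentwise) (auto simp: Basis_prod_def)

lemma emeasure_lborel_Times3:
  fixes A B C :: "real set"
  assumes "A \<in> sets borel" "B \<in> sets borel" "C \<in> sets borel"
  shows "emeasure lborel (A \<times> B \<times> C) = emeasure lborel A * emeasure lborel B * emeasure lborel C"
proof -
  have "emeasure lborel (A \<times> B \<times> C) = emeasure (lborel \<Otimes>\<^sub>M lborel) (A \<times> B \<times> C)"
    by (simp add: lborel_prod)
  also have "\<dots> = emeasure lborel A * emeasure lborel (B \<times> C)"
    using assms by (intro lborel.emeasure_pair_measure_Times) (auto intro: borel_Times)
  also have "emeasure lborel (B \<times> C) = emeasure (lborel \<Otimes>\<^sub>M lborel) (B \<times> C)"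
    by (simp add: lborel_prod)
  also have "\<dots> = emeasure lborel B * emeasure lborel C"
    using assms by (intro lborel.emeasure_pair_measure_Times) auto
  finally show ?thesis by (simp add: mult.assoc)
qed

lemma emeasure_abs_atLeastLessThan:
  fixes a b :: real
  assumes "0 \<le> a" "a \<le> b"
  shows "emeasure lborel {t. a \<le> \<bar>t\<bar> \<and> \<bar>t\<bar> < b} = ennreal (2 * (b - a))"
proof -
  have "{t. a \<le> \<bar>t\<bar> \<and> \<bar>t\<bar> < b} = {-b<..<b} - {-a<..<a}" by auto
  also have "emeasure lborel \<dots> = emeasure lborel {-b<..<b} - emeasure lborel {-a<..<a}"
    using assms by (intro emeasure_Diff) auto
  also have "\<dots> = ennreal (2 * b) - ennreal (2 * a)"
    using assms by simp
  also have "\<dots> = ennreal (2 * (b - a))"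
    using assms by (simp add: ennreal_minus algebra_simps)
  finally show ?thesis .
qed

lemma emeasure_less_cball:
  fixes A :: "'a::euclidean_space set"
  assumes "A \<in> sets lborel" "A \<subseteq> cball x R"
    and "ball z \<rho> \<subseteq> cball x R" "A \<inter> ball z \<rho> = {}" "\<rho> > 0"
  shows "emeasure lborel A < emeasure lborel (cball x R)"
proof -
  have "emeasure lborel A \<noteq> \<infinity>"
    using assms(2) by (metis bounded_cball bounded_subset emeasure_bounded_finite less_irrefl)
  moreover have "0 < emeasure lborel (ball z \<rho>)"
    using assms(5) by (simp add: emeasure_ball)
  ultimately have "emeasure lborel A + 0 < emeasure lborel A + emeasure lborel (ball z \<rho>)"
    by (subst ennreal_add_left_cancel_less) simp
  also have "\<dots> = emeasure lborel (A \<union> ball z \<rho>)"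
    using assms by (intro plus_emeasure) auto
  also have "\<dots> \<le> emeasure lborel (cball x R)"
    using assms by (intro emeasure_mono) auto
  finally show ?thesis by simp
qed

lemma ball_subset_cball_cap:
  fixes t R :: real
  assumes "0 \<le> t" "t < R"
  shows "ball (R - (R - t) / 2, 0 :: 'a::real_normed_vector) ((R - t) / 2)
    \<subseteq> cball 0 R \<inter> {y. t < fst y}"
proof
  fix y :: "real \<times> 'a"
  define z :: "real \<times> 'a" where "z = (R - (R - t) / 2, 0)"
  assume "y \<in> ball (R - (R - t) / 2, 0) ((R - t) / 2)"
  then have dist: "dist y z < (R - t) / 2"
    by (simp add: z_def dist_commute)
  have "norm z = R - (R - t) / 2"
    using assms by (simp add: z_def norm_Pair)
  then have "y \<in> cball 0 R"
    using dist norm_triangle_ineq2[of y z] by (simp add: dist_norm field_simps)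
  moreover have "\<bar>fst y - (R - (R - t) / 2)\<bar> \<le> dist y z"
    using norm_fst_le[of "fst (y - z)" "snd (y - z)", unfolded prod.collapse]
    by (simp add: z_def dist_norm)
  then have "t < fst y"
    using dist by (simp add: abs_le_iff field_simps)
  ultimately show "y \<in> cball 0 R \<inter> {y. t < fst y}" by simp
qed

definition cell_index :: "real \<Rightarrow> real \<Rightarrow> nat" where
  "cell_index h t = nat \<lfloor>\<bar>t\<bar> / h\<rfloor> + 1"

lemma cell_index_eq_iff:
  assumes "h > 0" "m \<ge> 1"
  shows "cell_index h t = m \<longleftrightarrow> (real m - 1) * h \<le> \<bar>t\<bar> \<and> \<bar>t\<bar> < real m * h"
proof -
  have "cell_index h t = m \<longleftrightarrow> \<lfloor>\<bar>t\<bar> / h\<rfloor> = int m - 1"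
    using assms by (auto simp: cell_index_def)
  also have "\<dots> \<longleftrightarrow> real m - 1 \<le> \<bar>t\<bar> / h \<and> \<bar>t\<bar> / h < real m"
    by (simp add: floor_eq_iff)
  also have "\<dots> \<longleftrightarrow> (real m - 1) * h \<le> \<bar>t\<bar> \<and> \<bar>t\<bar> < real m * h"
    using assms(1) by (simp add: pos_le_divide_eq pos_divide_less_eq)
  finally show ?thesis .
qed

lemma cell_index_bounds:
  assumes "h > 0"
  shows "\<bar>t\<bar> < real (cell_index h t) * h" "real (cell_index h t) * h \<le> \<bar>t\<bar> + h"
proof -
  have "cell_index h t \<ge> 1" by (simp add: cell_index_def)
  then show "\<bar>t\<bar> < real (cell_index h t) * h" "real (cell_index h t) * h \<le> \<bar>t\<bar> + h"
    using cell_index_eq_iff[OF assms, of "cell_index h t" t] by (simp_all add: algebra_simps)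
qed

lemma cell_index_level_borel:
  assumes "h > 0"
  shows "{t. cell_index h t = m} \<in> sets borel"
proof (cases "m = 0")
  case True
  then show ?thesis by (simp add: cell_index_def)
next
  case False
  then show ?thesis using assms by (simp add: cell_index_eq_iff)
qed

lemma emeasure_cell_index_level:
  assumes "h > 0" "m \<ge> 1"
  shows "emeasure lborel {t. cell_index h t = m} = ennreal (2 * h)"
  using assms emeasure_abs_atLeastLessThan[of "(real m - 1) * h" "real m * h"]
  by (simp add: cell_index_eq_iff algebra_simps)

definition lattice_point :: "real \<Rightarrow> real \<Rightarrow> real \<Rightarrow> nat \<times> nat \<times> nat \<Rightarrow> real \<times> real \<times> real" where
  "lattice_point h1 h2 h3 = (\<lambda>(n1, n2, n3). (real n1 * h1, real n2 * h2, real n3 * h3))"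

text \<open>The cell of the lattice index n is the fibre lattice_cell h1 h2 h3 -` {n}.\<close>

definition lattice_cell :: "real \<Rightarrow> real \<Rightarrow> real \<Rightarrow> real \<times> real \<times> real \<Rightarrow> nat \<times> nat \<times> nat" where
  "lattice_cell h1 h2 h3 = (\<lambda>(y1, y2, y3). (cell_index h1 y1, cell_index h2 y2, cell_index h3 y3))"

definition lattice_ball :: "real \<Rightarrow> real \<Rightarrow> real \<Rightarrow> real \<Rightarrow> (nat \<times> nat \<times> nat) set" where
  "lattice_ball h1 h2 h3 R = {n \<in> pos_idx. norm (lattice_point h1 h2 h3 n) \<le> R}"

lemma lattice_cell_pos_idx: "lattice_cell h1 h2 h3 y \<in> pos_idx"
  by (auto simp: lattice_cell_def cell_index_def pos_idx_def split: prod.splits)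

lemma norm_le_norm_lattice_point:
  assumes "n \<in> pos_idx"
  shows "norm (h1, h2, h3) \<le> norm (lattice_point h1 h2 h3 n)"
proof -
  have "\<bar>h\<bar> \<le> \<bar>real k * h\<bar>" if "k \<ge> 1" for k :: nat and h :: real
    using that by (simp add: abs_mult mult_le_cancel_right1)
  then show ?thesis
    using assms by (auto simp: pos_idx_def lattice_point_def intro!: norm_triple_le_componentwise)
qed

lemma norm_le_norm_lattice_point_cell:
  assumes "h1 > 0" "h2 > 0" "h3 > 0"
  shows "norm y \<le> norm (lattice_point h1 h2 h3 (lattice_cell h1 h2 h3 y))"
  using cell_index_bounds(1) assms
  by (cases y) (auto simp: lattice_point_def lattice_cell_def intro!: norm_triple_le_componentwise
      intro: less_imp_le)

lemma norm_lattice_point_cell_le: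
  assumes "h1 > 0" "h2 > 0" "h3 > 0"
  shows "norm (lattice_point h1 h2 h3 (lattice_cell h1 h2 h3 y)) \<le> norm y + norm (h1, h2, h3)"
proof (cases y)
  case (fields y1 y2 y3)
  have "norm (lattice_point h1 h2 h3 (lattice_cell h1 h2 h3 y))
      \<le> norm ((\<bar>y1\<bar>, \<bar>y2\<bar>, \<bar>y3\<bar>) + (h1, h2, h3))"
    using cell_index_bounds(2) assms
    by (auto simp: fields lattice_point_def lattice_cell_def intro!: norm_triple_le_componentwise)
  also have "\<dots> \<le> norm (\<bar>y1\<bar>, \<bar>y2\<bar>, \<bar>y3\<bar>) + norm (h1, h2, h3)"
    by (rule norm_triangle_ineq)
  also have "norm (\<bar>y1\<bar>, \<bar>y2\<bar>, \<bar>y3\<bar>) = norm y"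
    by (simp add: fields norm_triple)
  finally show ?thesis .
qed

lemma finite_lattice_ball:
  assumes "h1 > 0" "h2 > 0" "h3 > 0"
  shows "finite (lattice_ball h1 h2 h3 R)"
proof -
  have bound: "k \<le> nat \<lceil>R / h\<rceil>" if "real k * h \<le> R" "h > 0" for k :: nat and h
  proof -
    have "real k \<le> R / h" using that by (simp add: pos_le_divide_eq)
    then show ?thesis by linarith
  qed
  have "lattice_ball h1 h2 h3 R \<subseteq> {..nat \<lceil>R / h1\<rceil>} \<times> {..nat \<lceil>R / h2\<rceil>} \<times> {..nat \<lceil>R / h3\<rceil>}"
  proof (clarsimp)
    fix n1 n2 n3
    assume "(n1, n2, n3) \<in> lattice_ball h1 h2 h3 R"
    then have "norm (real n1 * h1, real n2 * h2, real n3 * h3) \<le> R"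
      by (simp add: lattice_ball_def lattice_point_def)
    moreover have "real n1 * h1 \<le> norm (real n1 * h1, real n2 * h2, real n3 * h3)"
      "real n2 * h2 \<le> norm (real n1 * h1, real n2 * h2, real n3 * h3)"
      "real n3 * h3 \<le> norm (real n1 * h1, real n2 * h2, real n3 * h3)"
      using assms by (auto simp: norm_triple intro!: real_le_rsqrt)
    ultimately show "n1 \<le> nat \<lceil>R / h1\<rceil> \<and> n2 \<le> nat \<lceil>R / h2\<rceil> \<and> n3 \<le> nat \<lceil>R / h3\<rceil>"
      using assms by (auto intro!: bound)
  qed
  then show ?thesis by (rule finite_subset) auto
qed

lemma lattice_cell_vimage_singleton:
  "lattice_cell h1 h2 h3 -` {(n1, n2, n3)}
     = {t. cell_index h1 t = n1} \<times> {t. cell_index h2 t = n2} \<times> {t. cell_index h3 t = n3}"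
  by (auto simp: lattice_cell_def)

lemma lattice_cell_vimage_borel:
  assumes "h1 > 0" "h2 > 0" "h3 > 0" "finite S"
  shows "lattice_cell h1 h2 h3 -` S \<in> sets borel"
proof -
  have "lattice_cell h1 h2 h3 -` {n} \<in> sets borel" for n
    using assms by (cases n) (simp add: lattice_cell_vimage_singleton borel_Times cell_index_level_borel)
  moreover have "lattice_cell h1 h2 h3 -` S = (\<Union>n\<in>S. lattice_cell h1 h2 h3 -` {n})"
    by auto
  ultimately show ?thesis using assms(4) by auto
qed

lemma emeasure_lattice_cell:
  assumes "h1 > 0" "h2 > 0" "h3 > 0" "n \<in> pos_idx"
  shows "emeasure lborel (lattice_cell h1 h2 h3 -` {n}) = ennreal (8 * (h1 * h2 * h3))"
proof (cases n)
  case (fields n1 n2 n3)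
  with assms have "emeasure lborel (lattice_cell h1 h2 h3 -` {n})
      = ennreal (2 * h1) * ennreal (2 * h2) * ennreal (2 * h3)"
    by (simp add: pos_idx_def lattice_cell_vimage_singleton emeasure_lborel_Times3
        cell_index_level_borel emeasure_cell_index_level)
  also have "\<dots> = ennreal (8 * (h1 * h2 * h3))"
    using assms by (simp add: ennreal_mult[symmetric] mult_ac)
  finally show ?thesis .
qed

lemma emeasure_lattice_cells:
  assumes "h1 > 0" "h2 > 0" "h3 > 0" "finite S" "S \<subseteq> pos_idx"
  shows "emeasure lborel (lattice_cell h1 h2 h3 -` S) = ennreal (8 * (h1 * h2 * h3) * card S)"
proof -
  have "emeasure lborel (lattice_cell h1 h2 h3 -` S)
      = emeasure lborel (\<Union>n\<in>S. lattice_cell h1 h2 h3 -` {n})"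
    by (subst vimage_eq_UN) (rule refl)
  also have "\<dots> = (\<Sum>n\<in>S. emeasure lborel (lattice_cell h1 h2 h3 -` {n}))"
  proof (rule sum_emeasure[symmetric])
    show "finite S" by (rule assms(4))
    show "disjoint_family_on (\<lambda>n. lattice_cell h1 h2 h3 -` {n}) S"
      by (auto simp: disjoint_family_on_def)
    show "(\<lambda>n. lattice_cell h1 h2 h3 -` {n}) ` S \<subseteq> sets lborel"
      using assms(1-3) by (simp add: image_subset_iff lattice_cell_vimage_borel)
  qed
  also have "\<dots> = (\<Sum>n\<in>S. ennreal (8 * (h1 * h2 * h3)))"
    using assms by (intro sum.cong) (auto simp: emeasure_lattice_cell)
  also have "\<dots> = ennreal (8 * (h1 * h2 * h3) * card S)"
    using assms by (simp add: ennreal_of_nat_eq_real_of_nat ennreal_mult'[symmetric] mult.commute)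
  finally show ?thesis .
qed

lemma lattice_ball_cells_subset_cball:
  assumes "h1 > 0" "h2 > 0" "h3 > 0"
  shows "lattice_cell h1 h2 h3 -` lattice_ball h1 h2 h3 R \<subseteq> cball 0 R"
proof
  fix y assume "y \<in> lattice_cell h1 h2 h3 -` lattice_ball h1 h2 h3 R"
  then show "y \<in> cball 0 R"
    using norm_le_norm_lattice_point_cell[OF assms, of y] by (simp add: lattice_ball_def)
qed

lemma ball_subset_lattice_ball_cells:
  assumes "h1 > 0" "h2 > 0" "h3 > 0"
  shows "ball 0 (R - norm (h1, h2, h3)) \<subseteq> lattice_cell h1 h2 h3 -` lattice_ball h1 h2 h3 R"
proof
  fix y :: "real \<times> real \<times> real"
  assume "y \<in> ball 0 (R - norm (h1, h2, h3))"
  then have "norm (lattice_point h1 h2 h3 (lattice_cell h1 h2 h3 y)) \<le> R"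
    using norm_lattice_point_cell_le[OF assms, of y] by simp
  then show "y \<in> lattice_cell h1 h2 h3 -` lattice_ball h1 h2 h3 R"
    by (simp add: lattice_ball_def lattice_cell_pos_idx)
qed

lemma lattice_ball_cells_fst_bound:
  assumes "h1 > 0" "h2 > 0" "h3 > 0" "y \<in> lattice_cell h1 h2 h3 -` lattice_ball h1 h2 h3 R"
  shows "(fst y)\<^sup>2 + h2\<^sup>2 < R\<^sup>2"
proof -
  obtain y1 y2 y3 where y: "y = (y1, y2, y3)" by (cases y)
  obtain n1 n2 n3 where n: "lattice_cell h1 h2 h3 y = (n1, n2, n3)" by (cases "lattice_cell h1 h2 h3 y")
  have "\<bar>y1\<bar> < real n1 * h1"
    using cell_index_bounds(1)[OF assms(1), of y1] n y by (simp add: lattice_cell_def)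
  then have "\<bar>y1\<bar>\<^sup>2 < (real n1 * h1)\<^sup>2"
    by (intro power_strict_mono) auto
  moreover have "h2\<^sup>2 \<le> (real n2 * h2)\<^sup>2"
    using n lattice_cell_pos_idx[of h1 h2 h3 y] assms(2)
    by (intro power_mono) (auto simp: pos_idx_def)
  moreover have "sqrt ((real n1 * h1)\<^sup>2 + (real n2 * h2)\<^sup>2 + (real n3 * h3)\<^sup>2) \<le> R"
    using assms(4) n by (simp add: lattice_ball_def lattice_point_def norm_triple)
  then have "(real n1 * h1)\<^sup>2 + (real n2 * h2)\<^sup>2 + (real n3 * h3)\<^sup>2 \<le> R\<^sup>2"
    by (rule sqrt_le_D)
  moreover have "(fst y)\<^sup>2 = \<bar>y1\<bar>\<^sup>2" "0 \<le> (real n3 * h3)\<^sup>2"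
    using y by simp_all
  ultimately show ?thesis by linarith
qed

lemma card_lattice_ball_upper:
  assumes "h1 > 0" "h2 > 0" "h3 > 0" "R > 0"
  shows "8 * (h1 * h2 * h3) * card (lattice_ball h1 h2 h3 R) < 4 / 3 * pi * R ^ 3"
proof -
  define U where "U = lattice_cell h1 h2 h3 -` lattice_ball h1 h2 h3 R"
  define t where "t = sqrt (max 0 (R\<^sup>2 - h2\<^sup>2))"
  have t: "0 \<le> t" "t < R"
    using assms unfolding t_def by (auto intro: real_less_lsqrt)
  have "U \<inter> {y. t < fst y} = {}"
  proof (intro disjoint_iff[THEN iffD2] allI impI notI)
    fix y assume y: "y \<in> U" "y \<in> {y. t < fst y}"
    then have "t\<^sup>2 < (fst y)\<^sup>2"
      using t(1) by (intro power_strict_mono) auto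
    moreover have "R\<^sup>2 - h2\<^sup>2 \<le> t\<^sup>2"
      by (simp add: t_def)
    ultimately show False
      using lattice_ball_cells_fst_bound[OF assms(1-3) y(1)[unfolded U_def]] by linarith
  qed
  then have "emeasure lborel U < emeasure lborel (cball (0 :: real \<times> real \<times> real) R)"
    using lattice_ball_cells_subset_cball[OF assms(1-3)] ball_subset_cball_cap[OF t] t(2) assms
    by (intro emeasure_less_cball[where z = "(R - (R - t) / 2, 0)" and \<rho> = "(R - t) / 2"])
      (auto simp: U_def lattice_cell_vimage_borel finite_lattice_ball)
  also have "emeasure lborel (cball (0 :: real \<times> real \<times> real) R) = ennreal (4 / 3 * pi * R ^ 3)"
    using assms(4) by (simp add: emeasure_cball unit_ball_vol_3 power3_eq_cube)
  also have "emeasure lborel U = ennreal (8 * (h1 * h2 * h3) * card (lattice_ball h1 h2 h3 R))"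
    unfolding U_def using assms finite_lattice_ball[OF assms(1-3)]
    by (intro emeasure_lattice_cells) (auto simp: lattice_ball_def)
  finally show ?thesis
    by (rule ennreal_less_iff[THEN iffD1, rotated]) (use assms in simp)
qed

lemma card_lattice_ball_lower:
  assumes "h1 > 0" "h2 > 0" "h3 > 0"
  shows "4 / 3 * pi * (R - norm (h1, h2, h3)) ^ 3 \<le> 8 * (h1 * h2 * h3) * card (lattice_ball h1 h2 h3 R)"
proof (cases "R - norm (h1, h2, h3) < 0")
  case True
  then have "4 / 3 * pi * (R - norm (h1, h2, h3)) ^ 3 \<le> 0"
    by (intro mult_nonneg_nonpos) (simp_all add: power_le_zero_eq)
  also have "0 \<le> 8 * (h1 * h2 * h3) * card (lattice_ball h1 h2 h3 R)"
    using assms by simp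
  finally show ?thesis .
next
  case False
  have "ennreal (4 / 3 * pi * (R - norm (h1, h2, h3)) ^ 3)
      = emeasure lborel (ball (0 :: real \<times> real \<times> real) (R - norm (h1, h2, h3)))"
    using False by (simp add: emeasure_ball unit_ball_vol_3 power3_eq_cube)
  also have "\<dots> \<le> emeasure lborel (lattice_cell h1 h2 h3 -` lattice_ball h1 h2 h3 R)"
    using assms finite_lattice_ball[OF assms]
    by (intro emeasure_mono ball_subset_lattice_ball_cells) (simp_all add: lattice_cell_vimage_borel)
  also have "\<dots> = ennreal (8 * (h1 * h2 * h3) * card (lattice_ball h1 h2 h3 R))"
    using assms finite_lattice_ball[OF assms]
    by (intro emeasure_lattice_cells) (auto simp: lattice_ball_def)
  finally show ?thesis
    using assms by (simp add: ennreal_le_iff)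
qed

definition lattice_spacing :: "real \<Rightarrow> real \<Rightarrow> real" where
  "lattice_spacing a V = pi / sqrt 2 * V powr (- a)"

lemma lattice_spacing_pos: "V > 0 \<Longrightarrow> lattice_spacing a V > 0"
  by (simp add: lattice_spacing_def)

lemma eig_eq_norm_lattice_point:
  "eig a1 a2 a3 V n
     = (norm (lattice_point (lattice_spacing a1 V) (lattice_spacing a2 V) (lattice_spacing a3 V) n))\<^sup>2"
proof -
  have sq: "(lattice_spacing a V)\<^sup>2 = pi\<^sup>2 / 2 * V powr (-2 * a)" for a
  proof -
    have "(V powr (- a))\<^sup>2 = V powr (-2 * a)"
      by (simp add: power2_eq_square powr_add[symmetric])
    then show ?thesis
      by (simp add: lattice_spacing_def power_mult_distrib power_divide)
  qed
  show ?thesis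
    by (cases n) (simp add: eig_def lattice_point_def norm_triple power_mult_distrib sq algebra_simps)
qed

lemma E1_eq_norm_lattice_spacing:
  "E1 a1 a2 a3 V = (norm (lattice_spacing a1 V, lattice_spacing a2 V, lattice_spacing a3 V))\<^sup>2"
proof -
  have "eig a1 a2 a3 V (1, 1, 1) \<le> eig a1 a2 a3 V n" if "n \<in> pos_idx" for n
    using norm_le_norm_lattice_point[OF that]
    by (simp add: eig_eq_norm_lattice_point lattice_point_def power_mono)
  then have "E1 a1 a2 a3 V = eig a1 a2 a3 V (1, 1, 1)"
    unfolding E1_def by (intro cInf_eq_minimum) (auto simp: pos_idx_def)
  then show ?thesis
    by (simp add: eig_eq_norm_lattice_point lattice_point_def)
qed

lemma eigenvalues_below_eq_lattice_ball:
  "{n \<in> pos_idx. eig a1 a2 a3 V n - E1 a1 a2 a3 V \<le> \<eta>}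
     = lattice_ball (lattice_spacing a1 V) (lattice_spacing a2 V) (lattice_spacing a3 V)
         (sqrt (\<eta> + E1 a1 a2 a3 V))"
proof -
  have "x\<^sup>2 \<le> y \<longleftrightarrow> x \<le> sqrt y" if "0 \<le> x" for x y :: real
    using that by (metis real_sqrt_unique real_sqrt_le_iff)
  then show ?thesis
    by (auto simp: lattice_ball_def eig_eq_norm_lattice_point algebra_simps)
qed

lemma lattice_spacing_volume:
  assumes "V > 0" "a1 + a2 + a3 = 1"
  shows "8 * (lattice_spacing a1 V * lattice_spacing a2 V * lattice_spacing a3 V) * V
    = 2 * sqrt 2 * pi ^ 3"
proof -
  have "V powr (- a1) * V powr (- a2) * V powr (- a3) = V powr (- a1 + - a2 + - a3)"
    by (simp only: powr_add)
  also have "- a1 + - a2 + - a3 = - 1"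
    using assms(2) by linarith
  finally have "V powr (- a1) * V powr (- a2) * V powr (- a3) * V = 1"
    using assms(1) by (simp add: powr_minus_divide)
  then have "8 * (lattice_spacing a1 V * lattice_spacing a2 V * lattice_spacing a3 V) * V
      = 8 * (pi / sqrt 2) ^ 3"
    by (simp add: lattice_spacing_def power3_eq_cube mult_ac)
  also have "\<dots> = 2 * sqrt 2 * pi ^ 3"
    by (simp add: power_divide power3_eq_cube field_simps)
  finally show ?thesis .
qed

lemma FV_eq_lattice_ball_volume:
  fixes a1 a2 a3 V \<eta> :: real
  defines "h1 \<equiv> lattice_spacing a1 V" and "h2 \<equiv> lattice_spacing a2 V"
    and "h3 \<equiv> lattice_spacing a3 V" and "R \<equiv> sqrt (\<eta> + E1 a1 a2 a3 V)"
  assumes V: "V > 0" and exponents: "a1 + a2 + a3 = 1"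
  shows "FV a1 a2 a3 V \<eta>
    = sqrt 2 / (3 * pi\<^sup>2) * (8 * (h1 * h2 * h3) * card (lattice_ball h1 h2 h3 R) / (4 / 3 * pi))"
proof -
  have "FV a1 a2 a3 V \<eta> = card (lattice_ball h1 h2 h3 R) / V"
    by (simp add: FV_def eigenvalues_below_eq_lattice_ball h1_def h2_def h3_def R_def)
  also have "\<dots> = sqrt 2 / (3 * pi\<^sup>2) * (8 * (h1 * h2 * h3) * card (lattice_ball h1 h2 h3 R) / (4 / 3 * pi))"
  proof -
    have "V = 2 * sqrt 2 * pi ^ 3 / (8 * (h1 * h2 * h3))"
      using lattice_spacing_volume[OF V exponents] lattice_spacing_pos[OF V, THEN less_imp_neq, symmetric]
      by (simp add: h1_def h2_def h3_def field_simps)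
    then show ?thesis
      by (simp add: field_simps power2_eq_square power3_eq_cube)
  qed
  finally show ?thesis .
qed

lemma norm_lattice_spacing_le:
  assumes "V \<ge> 1" "a3 \<le> a2" "a2 \<le> a1"
  shows "norm (lattice_spacing a1 V, lattice_spacing a2 V, lattice_spacing a3 V)
    \<le> pi * sqrt (3 / 2) * V powr (- a3)"
proof -
  have "\<bar>lattice_spacing a V\<bar> \<le> \<bar>lattice_spacing a3 V\<bar>" if "a3 \<le> a" for a
  proof -
    have "V powr (- a) \<le> V powr (- a3)"
      using assms(1) that by (intro powr_mono) auto
    then show ?thesis
      using assms(1) by (simp add: lattice_spacing_def divide_right_mono)
  qed
  then have "norm (lattice_spacing a1 V, lattice_spacing a2 V, lattice_spacing a3 V)
      \<le> norm (lattice_spacing a3 V, lattice_spacing a3 V, lattice_spacing a3 V)"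
    using assms by (intro norm_triple_le_componentwise) auto
  also have "\<dots> = sqrt 3 * lattice_spacing a3 V"
    using assms(1) by (simp add: norm_triple real_sqrt_mult lattice_spacing_def)
  also have "\<dots> = pi * sqrt (3 / 2) * V powr (- a3)"
    by (simp add: lattice_spacing_def real_sqrt_divide)
  finally show ?thesis .
qed

lemma FV_bounds:
  assumes "a3 \<le> a2" "a2 \<le> a1" "a1 + a2 + a3 = 1" "V \<ge> 1" "\<eta> \<ge> 0"
  shows "sqrt 2 / (3 * pi\<^sup>2) * (sqrt \<eta> - pi * sqrt (3 / 2) * V powr (- a3)) ^ 3 < FV a1 a2 a3 V \<eta>"
    and "FV a1 a2 a3 V \<eta> < sqrt 2 / (3 * pi\<^sup>2) * (\<eta> + E1 a1 a2 a3 V) powr (3 / 2)"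
proof -
  define h1 where "h1 = lattice_spacing a1 V"
  define h2 where "h2 = lattice_spacing a2 V"
  define h3 where "h3 = lattice_spacing a3 V"
  define R where "R = sqrt (\<eta> + E1 a1 a2 a3 V)"
  define N where "N = 8 * (h1 * h2 * h3) * card (lattice_ball h1 h2 h3 R) / (4 / 3 * pi)"
  have h: "h1 > 0" "h2 > 0" "h3 > 0"
    using assms(4) by (simp_all add: h1_def h2_def h3_def lattice_spacing_pos)
  have E1: "E1 a1 a2 a3 V = (norm (h1, h2, h3))\<^sup>2"
    by (simp add: E1_eq_norm_lattice_spacing h1_def h2_def h3_def)
  have FV: "FV a1 a2 a3 V \<eta> = sqrt 2 / (3 * pi\<^sup>2) * N"
    using FV_eq_lattice_ball_volume[of V a1 a2 a3 \<eta>] assms(3,4)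
    by (simp add: N_def h1_def h2_def h3_def R_def)
  have "sqrt \<eta> < R"
    using h by (simp add: R_def E1 zero_prod_def)
  moreover have "norm (h1, h2, h3) \<le> pi * sqrt (3 / 2) * V powr (- a3)"
    using norm_lattice_spacing_le[OF assms(4,1,2)] by (simp add: h1_def h2_def h3_def)
  ultimately have "(sqrt \<eta> - pi * sqrt (3 / 2) * V powr (- a3)) ^ 3 < (R - norm (h1, h2, h3)) ^ 3"
    by (intro power3_strict_mono) linarith
  also have "\<dots> \<le> N"
    using card_lattice_ball_lower[OF h, of R] by (simp add: N_def field_simps)
  finally show "sqrt 2 / (3 * pi\<^sup>2) * (sqrt \<eta> - pi * sqrt (3 / 2) * V powr (- a3)) ^ 3
      < FV a1 a2 a3 V \<eta>"
    unfolding FV by (intro mult_strict_left_mono) simp_all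
  have "0 < R"
    using h assms(5) by (simp add: R_def E1 zero_prod_def add_nonneg_pos)
  then have "N < R ^ 3"
    using card_lattice_ball_upper[OF h] by (simp add: N_def field_simps)
  also have "R ^ 3 = (\<eta> + E1 a1 a2 a3 V) powr (3 / 2)"
    using assms(5) by (simp add: R_def E1 sqrt_power3_eq_powr)
  finally show "FV a1 a2 a3 V \<eta> < sqrt 2 / (3 * pi\<^sup>2) * (\<eta> + E1 a1 a2 a3 V) powr (3 / 2)"
    unfolding FV by (intro mult_strict_left_mono) simp_all
qed

theorem lemma3p4:
  fixes a1 a2 a3 :: real
  assumes "a1 \<ge> a2" "a2 \<ge> a3" "a3 > 0" "a1 + a2 + a3 = 1"
  shows "\<exists>C::real. \<forall>V::real. \<forall>\<eta>::real. V \<ge> 1 \<and> \<eta> \<ge> 0 \<longrightarrow>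
    sqrt 2 / (3 * pi\<^sup>2) * (sqrt \<eta> - C * V powr (- a3)) ^ 3 < FV a1 a2 a3 V \<eta> \<and>
    FV a1 a2 a3 V \<eta> < sqrt 2 / (3 * pi\<^sup>2) * (\<eta> + E1 a1 a2 a3 V) powr (3 / 2)"
  using FV_bounds[OF assms(2,1,4)] by (intro exI[of _ "pi * sqrt (3 / 2)"]) blast

end
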